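(* Let $\eta\in\{0,1\}$ and $\alpha\in\{-1,1\}$. Let $\vec G$ be a digraph without loops or multiple arcs, with vertex set $\{v_1,\dots,v_n\}$ and $m$ arcs, and define $$g(\vec G;x)=d_2\big(xI_n-\eta D(\vec G)-\alpha A(\vec G)\big).$$ Then $$(m-n)\,g(\vec G;x)+x\,g'(\vec G;x)=\sum_{\vec e\in E(\vec G)} g(\vec G-\vec e;x),$$ where $g'$ is the derivative with respect to $x$ and $\vec G-\vec e$ is $\vec G$ with the arc $\vec e$ deleted (so $g(\vec G-\vec e;x)=d_2(xI_n-\eta D(\vec G-\vec e)-\alpha A(\vec G-\vec e))$).
   Context: For a digraph $\vec H$ on vertices $v_1,\dots,v_n$, $A(\vec H)=(a_{ij})$ is the adjacency matrix with $a_{ij}=1$ if $(v_i,v_j)$ is an arc and $0$ otherwise, and $D(\vec H)=\mathrm{diag}(d^-(v_1),\dots,d^-(v_n))$ is the diagonal matrix of in-degrees. For an $n\times n$ matrix $M=(m_{ij})$ ($n\ge 2$), the second immanant is $d_2(M)=\sum_{\sigma\in S_n}\chi_2(\sigma)\prod_{s=1}^n m_{s\sigma(s)}$, where $\chi_2$ is the irreducible character of $S_n$ corresponding to the partition $(2,1^{n-2})$. *)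

theory Defs
  imports "HOL-Combinatorics.Permutations" "HOL-Computational_Algebra.Polynomial"
begin

text \<open>Digraphs on vertex set {0..<n} are given by their arc set E of ordered pairs.\<close>

text \<open>Irreducible character of S_n for the partition (2,1^(n-2)):
  chi(sigma) = sign(sigma) * (number of fixed points of sigma - 1).\<close>
definition chi2 :: "nat \<Rightarrow> (nat \<Rightarrow> nat) \<Rightarrow> int" where
  "chi2 n \<sigma> = sign \<sigma> * (int (card {i\<in>{..<n}. \<sigma> i = i}) - 1)"

definition d2 :: "nat \<Rightarrow> (nat \<Rightarrow> nat \<Rightarrow> 'a::comm_ring_1) \<Rightarrow> 'a" where
  "d2 n M = (\<Sum>\<sigma> | \<sigma> permutes {..<n}. of_int (chi2 n \<sigma>) * (\<Prod>s<n. M s (\<sigma> s)))"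

definition indeg :: "(nat \<times> nat) set \<Rightarrow> nat \<Rightarrow> nat" where
  "indeg E j = card {i. (i, j) \<in> E}"

definition adj :: "(nat \<times> nat) set \<Rightarrow> nat \<Rightarrow> nat \<Rightarrow> real" where
  "adj E i j = (if (i, j) \<in> E then 1 else 0)"

definition charmat :: "real \<Rightarrow> real \<Rightarrow> (nat \<times> nat) set \<Rightarrow> nat \<Rightarrow> nat \<Rightarrow> real poly" where
  "charmat \<eta> \<alpha> E i j =
     (if i = j then [:- (\<eta> * real (indeg E i)), 1:] else 0) - [:\<alpha> * adj E i j:]"

definition gpoly :: "nat \<Rightarrow> real \<Rightarrow> real \<Rightarrow> (nat \<times> nat) set \<Rightarrow> real poly" where
  "gpoly n \<eta> \<alpha> E = d2 n (charmat \<eta> \<alpha> E)"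

end

theory Submission
  imports Defs
begin

text \<open>Fix a permutation \<open>\<sigma>\<close>. Every entry \<open>M s (\<sigma> s)\<close> of \<open>x I - \<eta> D - \<alpha> A\<close> is a linear
  polynomial whose constant term is a sum of contributions of single arcs, and every arc
  contributes to at most one of these \<open>n\<close> entries. Regarding the arc contributions as
  independent variables \<open>w\<^sub>e\<close>, the diagonal product is homogeneous of degree \<open>n\<close> in \<open>x\<close> and
  the \<open>w\<^sub>e\<close>, and of degree at most one in each \<open>w\<^sub>e\<close>. Euler's identity for homogeneous
  polynomials then reads \<open>x p' + \<Sum>\<^sub>e (p - p(w\<^sub>e := 0)) = n p\<close>, and deleting the arc \<open>e\<close> is
  exactly setting \<open>w\<^sub>e = 0\<close>. Summing over \<open>\<sigma>\<close> with the weights \<open>\<chi>\<^sub>2(\<sigma>)\<close> gives the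
  theorem, for arbitrary real \<open>\<eta>\<close> and \<open>\<alpha>\<close>.\<close>

lemma pderiv_sum: "pderiv (\<Sum>x\<in>A. f x) = (\<Sum>x\<in>A. pderiv (f x))"
  by (induction A rule: infinite_finite_induct) (auto simp: pderiv_add)

lemma smult_sum_right: "smult c (\<Sum>x\<in>A. f x) = (\<Sum>x\<in>A. smult c (f x))"
  by (induction A rule: infinite_finite_induct) (auto simp: smult_add_right)

lemma prod_minus_const_single_support:
  fixes Q :: "'s \<Rightarrow> 'a::idom poly"
  assumes "finite S" and single: "\<And>s t. s \<in> S \<Longrightarrow> t \<in> S \<Longrightarrow> c s \<noteq> 0 \<Longrightarrow> c t \<noteq> 0 \<Longrightarrow> s = t"
  shows "(\<Prod>s\<in>S. Q s - [:c s:]) = (\<Prod>s\<in>S. Q s) - (\<Sum>s\<in>S. smult (c s) (\<Prod>t\<in>S-{s}. Q t))"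
proof (cases "\<exists>s\<in>S. c s \<noteq> 0")
  case False
  then show ?thesis by simp
next
  case True
  then obtain s0 where s0: "s0 \<in> S" "c s0 \<noteq> 0" by blast
  with single have others: "c s = 0" if "s \<in> S - {s0}" for s
    using that by blast
  have "(\<Prod>s\<in>S. Q s - [:c s:]) = (Q s0 - [:c s0:]) * (\<Prod>t\<in>S-{s0}. Q t)"
    using prod.remove[OF assms(1) s0(1), of "\<lambda>s. Q s - [:c s:]"] others by simp
  moreover have "(\<Sum>s\<in>S. smult (c s) (\<Prod>t\<in>S-{s}. Q t)) = smult (c s0) (\<Prod>t\<in>S-{s0}. Q t)"
    using sum.remove[OF assms(1) s0(1), of "\<lambda>s. smult (c s) (\<Prod>t\<in>S-{s}. Q t)"] others
    by (simp add: sum.neutral)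
  moreover have "(\<Prod>s\<in>S. Q s) = Q s0 * (\<Prod>t\<in>S-{s0}. Q t)"
    using prod.remove[OF assms(1) s0(1)] by simp
  ultimately show ?thesis by (simp add: algebra_simps)
qed

lemma euler_prod_linear:
  fixes a d :: "'s \<Rightarrow> 'a::idom"
  assumes "finite S"
  shows "(\<Sum>s\<in>S. smult (a s) (\<Prod>t\<in>S-{s}. [:a t, d t:])) + [:0, 1:] * pderiv (\<Prod>s\<in>S. [:a s, d s:])
         = of_nat (card S) * (\<Prod>s\<in>S. [:a s, d s:])"
proof -
  have "(\<Sum>s\<in>S. smult (a s) (\<Prod>t\<in>S-{s}. [:a t, d t:])) + [:0, 1:] * pderiv (\<Prod>s\<in>S. [:a s, d s:])
      = (\<Sum>s\<in>S. [:a s, d s:] * (\<Prod>t\<in>S-{s}. [:a t, d t:]))"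
    by (simp add: pderiv_prod pderiv_pCons sum_distrib_left sum.distrib[symmetric] algebra_simps)
  also have "\<dots> = (\<Sum>s\<in>S. \<Prod>t\<in>S. [:a t, d t:])"
    using assms by (intro sum.cong refl) (simp add: prod.remove)
  finally show ?thesis by simp
qed

lemma euler_sum_delete_prod_linear:
  fixes b :: "'s \<Rightarrow> 'e \<Rightarrow> 'a::idom" and d :: "'s \<Rightarrow> 'a"
  assumes "finite S" "finite E"
    and single: "\<And>e s t. e \<in> E \<Longrightarrow> s \<in> S \<Longrightarrow> t \<in> S \<Longrightarrow> b s e \<noteq> 0 \<Longrightarrow> b t e \<noteq> 0 \<Longrightarrow> s = t"
  shows "(\<Sum>e\<in>E. \<Prod>s\<in>S. [:\<Sum>f\<in>E-{e}. b s f, d s:])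
         = smult (of_nat (card E) - of_nat (card S)) (\<Prod>s\<in>S. [:\<Sum>f\<in>E. b s f, d s:])
           + [:0, 1:] * pderiv (\<Prod>s\<in>S. [:\<Sum>f\<in>E. b s f, d s:])"
proof -
  define a where "a s = (\<Sum>f\<in>E. b s f)" for s
  define P where "P = (\<Prod>s\<in>S. [:a s, d s:])"
  define R where "R s = (\<Prod>t\<in>S-{s}. [:a t, d t:])" for s
  have delete: "(\<Prod>s\<in>S. [:\<Sum>f\<in>E-{e}. b s f, d s:]) = P - (\<Sum>s\<in>S. smult (b s e) (R s))"
    if "e \<in> E" for e
  proof -
    have "(\<Prod>s\<in>S. [:\<Sum>f\<in>E-{e}. b s f, d s:]) = (\<Prod>s\<in>S. [:a s, d s:] - [:b s e:])"
      using that assms(2) by (intro prod.cong refl) (simp add: a_def sum_diff1)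
    also have "\<dots> = P - (\<Sum>s\<in>S. smult (b s e) (R s))"
      unfolding P_def R_def by (rule prod_minus_const_single_support[OF assms(1) single[OF that]])
    finally show ?thesis .
  qed
  have "(\<Sum>e\<in>E. \<Prod>s\<in>S. [:\<Sum>f\<in>E-{e}. b s f, d s:])
      = of_nat (card E) * P - (\<Sum>s\<in>S. smult (a s) (R s))"
    by (simp add: delete sum_subtractf a_def smult_sum sum.swap[of _ E])
  also have "(\<Sum>s\<in>S. smult (a s) (R s)) = of_nat (card S) * P - [:0, 1:] * pderiv P"
    using euler_prod_linear[OF assms(1), of a d] by (simp add: P_def R_def algebra_simps)
  finally show ?thesis
    by (simp add: P_def a_def algebra_simps of_nat_poly smult_diff_left)
qed

text \<open>Contribution of the arc \<open>f\<close> to the constant coefficient of the entry \<open>(s, \<sigma> s)\<close>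
  of \<open>x I - \<eta> D - \<alpha> A\<close>.\<close>
definition arc_weight :: "real \<Rightarrow> real \<Rightarrow> (nat \<Rightarrow> nat) \<Rightarrow> nat \<Rightarrow> nat \<times> nat \<Rightarrow> real" where
  "arc_weight \<eta> \<alpha> \<sigma> s f =
     (if \<sigma> s = s then if snd f = s then - \<eta> else 0
      else if f = (s, \<sigma> s) then - \<alpha> else 0)"

lemma indeg_eq_card_arcs_into: "indeg E j = card {f\<in>E. snd f = j}"
  unfolding indeg_def by (rule bij_betw_same_card[of "\<lambda>i. (i, j)"]) (auto simp: bij_betw_def inj_on_def)

lemma arc_weight_single_support:
  assumes "inj \<sigma>" "arc_weight \<eta> \<alpha> \<sigma> s e \<noteq> 0" "arc_weight \<eta> \<alpha> \<sigma> t e \<noteq> 0"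
  shows "s = t"
  using assms unfolding arc_weight_def inj_def by (auto split: if_splits)

lemma charmat_perm_entry:
  assumes "finite E" "\<forall>i. (i, i) \<notin> E"
  shows "charmat \<eta> \<alpha> E s (\<sigma> s) = [:\<Sum>f\<in>E. arc_weight \<eta> \<alpha> \<sigma> s f, of_bool (\<sigma> s = s):]"
proof (cases "\<sigma> s = s")
  case True
  have "(\<Sum>f\<in>E. arc_weight \<eta> \<alpha> \<sigma> s f) = (\<Sum>f\<in>{f\<in>E. snd f = s}. - \<eta>)"
    using True assms(1) by (simp add: arc_weight_def sum.inter_filter[symmetric])
  also have "\<dots> = - \<eta> * real (indeg E s)"
    by (simp add: indeg_eq_card_arcs_into)
  finally show ?thesis
    using True assms(2) by (simp add: charmat_def adj_def)
next
  case False
  then have "(\<Sum>f\<in>E. arc_weight \<eta> \<alpha> \<sigma> s f) = (if (s, \<sigma> s) \<in> E then - \<alpha> else 0)"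
    using assms(1) by (simp add: arc_weight_def sum.delta')
  then show ?thesis
    using False by (simp add: charmat_def adj_def)
qed

lemma gpoly_eq_sum_perm:
  assumes "finite E" "\<forall>i. (i, i) \<notin> E"
  shows "gpoly n \<eta> \<alpha> E = (\<Sum>\<sigma> | \<sigma> permutes {..<n}. smult (of_int (chi2 n \<sigma>))
           (\<Prod>s<n. [:\<Sum>f\<in>E. arc_weight \<eta> \<alpha> \<sigma> s f, of_bool (\<sigma> s = s):]))"
  unfolding gpoly_def d2_def of_int_poly using charmat_perm_entry[OF assms] by simp

theorem lemma3p5:
  fixes n :: nat and E :: "(nat \<times> nat) set" and \<eta> \<alpha> :: real
  assumes "n \<ge> 2"
    and "\<eta> \<in> {0, 1}" and "\<alpha> \<in> {-1, 1}"
    and "E \<subseteq> {..<n} \<times> {..<n}"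
    and "\<forall>i. (i, i) \<notin> E"
  shows "smult (real (card E) - real n) (gpoly n \<eta> \<alpha> E) + [:0, 1:] * pderiv (gpoly n \<eta> \<alpha> E)
         = (\<Sum>e\<in>E. gpoly n \<eta> \<alpha> (E - {e}))"
proof -
  have fin: "finite E"
    using assms(4) finite_subset by blast
  define P where "P \<sigma> E' = (\<Prod>s<n. [:\<Sum>f\<in>E'. arc_weight \<eta> \<alpha> \<sigma> s f, of_bool (\<sigma> s = s):])" for \<sigma> E'
  have gpoly_subset: "gpoly n \<eta> \<alpha> E' = (\<Sum>\<sigma> | \<sigma> permutes {..<n}. smult (of_int (chi2 n \<sigma>)) (P \<sigma> E'))"
    if "E' \<subseteq> E" for E'
    unfolding P_def using that fin assms(5) by (intro gpoly_eq_sum_perm) (auto intro: finite_subset)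
  have euler: "(\<Sum>e\<in>E. P \<sigma> (E - {e})) = smult (real (card E) - real n) (P \<sigma> E) + [:0, 1:] * pderiv (P \<sigma> E)"
    if "\<sigma> permutes {..<n}" for \<sigma>
    unfolding P_def
    using euler_sum_delete_prod_linear[OF finite_lessThan fin arc_weight_single_support[OF permutes_inj[OF that]]]
    by simp
  have "(\<Sum>e\<in>E. gpoly n \<eta> \<alpha> (E - {e}))
      = (\<Sum>\<sigma> | \<sigma> permutes {..<n}. smult (of_int (chi2 n \<sigma>)) (\<Sum>e\<in>E. P \<sigma> (E - {e})))"
    by (simp add: gpoly_subset sum.swap[of _ E] smult_sum_right)
  also have "\<dots> = smult (real (card E) - real n) (gpoly n \<eta> \<alpha> E) + [:0, 1:] * pderiv (gpoly n \<eta> \<alpha> E)"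
    by (simp add: euler gpoly_subset pderiv_sum pderiv_smult smult_sum_right sum.distrib sum_distrib_left
        smult_add_right mult.commute)
  finally show ?thesis ..
qed

end
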